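(* Let $X,Z$ be real Banach spaces and $Y\subset X^*$ a closed subspace. Let $T:X\to Z$ be a bounded linear operator such that $T^*$ is an isometric isomorphism from $Z^*$ onto $Y$. Let $\varepsilon>0$ and let $\alpha$ be an ordinal such that $B_{X^*}\cap Y\subset d_\varepsilon^\alpha(B_{X^*})$. Then for every ordinal $\beta$ and every $z\in Z^*$: if $z\in d_\varepsilon^\beta(B_{Z^*})$, then $T^*z\in d_\varepsilon^{\alpha+\beta}(B_{X^*})$.
   Context: For a Banach space $W$, $B_{W^*}$ is the closed unit ball of $W^*$. For $w\in W$, $t\in\mathbb R$, let $H(w,t)=\{w^*\in W^*: w^*(w)>t\}$. For a weak$^*$-compact $K\subset W^*$, a weak$^*$-slice of $K$ is any nonempty set $H(w,t)\cap K$. For $\varepsilon>0$, $d_\varepsilon K$ is $K$ minus the union of all weak$^*$-slices of $K$ of norm diameter less than $\varepsilon$; $d_\varepsilon^0K=K$, $d_\varepsilon^{\beta+1}K=d_\varepsilon(d_\varepsilon^\beta K)$, $d_\varepsilon^\beta K=\bigcap_{\mu<\beta}d_\varepsilon^\mu K$ for limit $\beta$. $\alpha+\beta$ is ordinal addition. *)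

theory Defs
  imports "HOL-Analysis.Analysis"
begin

text \<open>Dual space W* is modelled as the type of bounded linear functionals W \<Rightarrow>L real,
  with the operator norm. Weak*-slice of K: nonempty set H(w,t) \<inter> K.\<close>

definition wstar_slice :: "'a::real_normed_vector \<Rightarrow> real \<Rightarrow> ('a \<Rightarrow>\<^sub>L real) set \<Rightarrow> ('a \<Rightarrow>\<^sub>L real) set"
  where "wstar_slice w t K = {f \<in> K. blinfun_apply f w > t}"

definition dder :: "real \<Rightarrow> ('a::real_normed_vector \<Rightarrow>\<^sub>L real) set \<Rightarrow> ('a \<Rightarrow>\<^sub>L real) set"
  where "dder eps K = K - \<Union>{S. \<exists>w t. S = wstar_slice w t K \<and> S \<noteq> {} \<and> diameter S < eps}"

text \<open>Ordinals are represented by well-orders (order types). One step of the transfinite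
  recursion: given the set A of previous positions (ordered by r) and the stages D at these
  positions, produce the next stage: K if A is empty (ordinal 0), d(D m) if A has a maximum m
  (successor ordinal), and the intersection otherwise (limit ordinal).\<close>
definition dstep :: "real \<Rightarrow> 'i rel \<Rightarrow> 'i set \<Rightarrow> ('i \<Rightarrow> ('a::real_normed_vector \<Rightarrow>\<^sub>L real) set)
    \<Rightarrow> ('a \<Rightarrow>\<^sub>L real) set \<Rightarrow> ('a \<Rightarrow>\<^sub>L real) set"
  where "dstep eps r A D K =
    (if A = {} then K
     else if (\<exists>m\<in>A. \<forall>j\<in>A. (j, m) \<in> r)
       then dder eps (D (SOME m. m \<in> A \<and> (\<forall>j\<in>A. (j, m) \<in> r)))
     else (\<Inter>j\<in>A. D j))"

text \<open>For a well-order r and i in Field r: dstage eps r K i = d_eps^gamma K, where gamma is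
  the order type of the strict initial segment underS r i.\<close>
definition dstage :: "real \<Rightarrow> 'i rel \<Rightarrow> ('a::real_normed_vector \<Rightarrow>\<^sub>L real) set \<Rightarrow> 'i \<Rightarrow> ('a \<Rightarrow>\<^sub>L real) set"
  where "dstage eps r K = wfrec (r - Id) (\<lambda>D i. dstep eps r (underS r i) D K)"

text \<open>dpow eps r K = d_eps^beta K where beta is the order type of the well-order r.\<close>
definition dpow :: "real \<Rightarrow> 'i rel \<Rightarrow> ('a::real_normed_vector \<Rightarrow>\<^sub>L real) set \<Rightarrow> ('a \<Rightarrow>\<^sub>L real) set"
  where "dpow eps r K = dstep eps r (Field r) (dstage eps r K) K"

text \<open>Ordinal sum of well-orders (copied from HOL-Cardinals Ordinal_Arithmetic).\<close>
definition osum :: "'a rel \<Rightarrow> 'b rel \<Rightarrow> ('a + 'b) rel"  (infixr \<open>+o\<close> 70)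
  where
    "r +o r' = map_prod Inl Inl ` r \<union> map_prod Inr Inr ` r' \<union>
     {(Inl a, Inr a') | a a' . a \<in> Field r \<and> a' \<in> Field r'}"

end

theory Submission
  imports Defs
begin

(* Write T* z = z o T.  Two facts combine to the theorem:
   (1) Additivity of the transfinite derivation:  d^(alpha + beta) K = d^beta (d^alpha K)
       for well-orders alpha, beta (lemma dpow_osum).  On the left summand the stages of
       alpha + beta are those of alpha; on the right summand they are the stages of beta,
       started from d^alpha K.
   (2) Transfer along an isometric adjoint: if T* is isometric and maps K into a bounded L,
       then it maps d^beta K into d^beta L (lemma dpow_transfer).  The basic step is that a
       weak*-slice H(x,t) of L pulls back to the slice H(T x, t) of K, and the isometry
       does not decrease diameters (lemma dder_transfer).
   By hypothesis T* maps B_{Z*} into B_{X*} \<inter> Y \<subseteq> d^alpha B_{X*}, so (2)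
   gives T* (d^beta B_{Z*}) \<subseteq> d^beta (d^alpha B_{X*}), which is d^(alpha+beta) B_{X*} by (1). *)

lemma dstep_empty: "dstep eps r {} D K = K"
  by (simp add: dstep_def)

text \<open>At a successor position the step derives the stage at the maximum; for an
  antisymmetric order the maximum is unique, so any maximum can be used.\<close>
lemma dstep_max:
  assumes "antisym r" "m \<in> A" "\<forall>j\<in>A. (j, m) \<in> r"
  shows "dstep eps r A D K = dder eps (D m)"
proof -
  let ?P = "\<lambda>m. m \<in> A \<and> (\<forall>j\<in>A. (j, m) \<in> r)"
  have "?P m" using assms(2,3) by blast
  then have "?P (SOME m. ?P m)" by (rule someI[where P = ?P])
  then have some_eq: "(SOME m. ?P m) = m"
    using antisymD[OF assms(1)] assms(2,3) by blast
  have "A \<noteq> {}" "\<exists>m\<in>A. \<forall>j\<in>A. (j, m) \<in> r" using assms(2,3) by blast+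
  then show ?thesis unfolding dstep_def by (simp only: if_False if_True some_eq)
qed

lemma dstep_limit:
  assumes "A \<noteq> {}" "\<not> (\<exists>m\<in>A. \<forall>j\<in>A. (j, m) \<in> r)"
  shows "dstep eps r A D K = (\<Inter>j\<in>A. D j)"
  unfolding dstep_def if_not_P[OF assms(1)] if_not_P[OF assms(2)] by (rule refl)

lemma dstep_cong:
  assumes "\<And>j. j \<in> A \<Longrightarrow> D j = D' j"
  shows "dstep eps r A D K = dstep eps r A D' K"
proof (cases "\<exists>m\<in>A. \<forall>j\<in>A. (j, m) \<in> r")
  case True
  let ?P = "\<lambda>m. m \<in> A \<and> (\<forall>j\<in>A. (j, m) \<in> r)"
  have "D (SOME m. ?P m) = D' (SOME m. ?P m)"
    using someI_ex[of ?P] True assms by blast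
  then show ?thesis unfolding dstep_def if_P[OF True] by simp
next
  case False
  show ?thesis unfolding dstep_def if_not_P[OF False] using assms by auto
qed

lemma dstage_eq:
  assumes "wf (r - Id)"
  shows "dstage eps r K i = dstep eps r (underS r i) (dstage eps r K) K"
proof -
  have "dstage eps r K i = dstep eps r (underS r i) (cut (dstage eps r K) (r - Id) i) K"
    unfolding dstage_def by (subst wfrec[OF assms]) simp
  also have "\<dots> = dstep eps r (underS r i) (dstage eps r K) K"
    by (rule dstep_cong) (auto simp: cut_def underS_def)
  finally show ?thesis .
qed

lemma Well_order_wf: "Well_order r \<Longrightarrow> wf (r - Id)"
  by (simp add: well_order_on_def)

lemma Well_order_antisym: "Well_order r \<Longrightarrow> antisym r"
  by (simp add: well_order_on_def linear_order_on_def partial_order_on_def)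

lemma dder_sub: "dder eps K \<subseteq> K"
  unfolding dder_def by auto

lemma dstep_sub:
  assumes "antisym r" "\<And>j. j \<in> A \<Longrightarrow> D j \<subseteq> K"
  shows "dstep eps r A D K \<subseteq> K"
proof (cases "\<exists>m\<in>A. \<forall>j\<in>A. (j, m) \<in> r")
  case True
  then obtain m where m: "m \<in> A" "\<forall>j\<in>A. (j, m) \<in> r" by blast
  have "dstep eps r A D K = dder eps (D m)" by (rule dstep_max[OF assms(1) m])
  also have "\<dots> \<subseteq> D m" by (rule dder_sub)
  also have "\<dots> \<subseteq> K" using m(1) by (rule assms(2))
  finally show ?thesis .
next
  case no_max: False
  show ?thesis
  proof (cases "A = {}")
    case False
    then show ?thesis unfolding dstep_limit[OF False no_max] using assms(2) by blast
  qed (simp add: dstep_empty)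
qed

lemma dstage_sub:
  assumes "Well_order r"
  shows "dstage eps r K i \<subseteq> K"
proof (induction i rule: wf_induct[OF Well_order_wf[OF assms]])
  case (1 i)
  have "dstage eps r K i = dstep eps r (underS r i) (dstage eps r K) K"
    by (rule dstage_eq[OF Well_order_wf[OF assms]])
  also have "\<dots> \<subseteq> K"
  proof (rule dstep_sub[OF Well_order_antisym[OF assms]])
    fix j assume "j \<in> underS r i"
    then have "(j, i) \<in> r - Id" by (auto simp: underS_def)
    then show "dstage eps r K j \<subseteq> K" using 1 by blast
  qed
  finally show ?case .
qed

lemma dpow_sub:
  assumes "Well_order r"
  shows "dpow eps r K \<subseteq> K"
  unfolding dpow_def
  by (rule dstep_sub[OF Well_order_antisym[OF assms] dstage_sub[OF assms]])

lemma dstep_le: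
  assumes "antisym r" "a \<in> A"
    and decr: "\<And>m. m \<in> A \<Longrightarrow> (a, m) \<in> r \<Longrightarrow> a \<noteq> m \<Longrightarrow> D m \<subseteq> D a"
  shows "dstep eps r A D K \<subseteq> D a"
proof (cases "\<exists>m\<in>A. \<forall>j\<in>A. (j, m) \<in> r")
  case True
  then obtain m where m: "m \<in> A" "\<forall>j\<in>A. (j, m) \<in> r" by blast
  have "dstep eps r A D K = dder eps (D m)" by (rule dstep_max[OF assms(1) m])
  also have "\<dots> \<subseteq> D m" by (rule dder_sub)
  also have "\<dots> \<subseteq> D a" using decr[of m] m assms(2) by (cases "a = m") auto
  finally show ?thesis .
next
  case False
  have ne: "A \<noteq> {}" using assms(2) by blast
  show ?thesis unfolding dstep_limit[OF ne False] using assms(2) by blast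
qed

lemma dstage_anti:
  assumes "Well_order r"
  shows "\<forall>j \<in> underS r i. dstage eps r K i \<subseteq> dstage eps r K j"
proof (induction i rule: wf_induct[OF Well_order_wf[OF assms]])
  case (1 i)
  show ?case
  proof
    fix j assume j: "j \<in> underS r i"
    have "dstage eps r K i = dstep eps r (underS r i) (dstage eps r K) K"
      by (rule dstage_eq[OF Well_order_wf[OF assms]])
    also have "\<dots> \<subseteq> dstage eps r K j"
    proof (rule dstep_le[OF Well_order_antisym[OF assms] j])
      fix m assume "m \<in> underS r i" "(j, m) \<in> r" "j \<noteq> m"
      then have "(m, i) \<in> r - Id" "j \<in> underS r m" by (auto simp: underS_def)
      then show "dstage eps r K m \<subseteq> dstage eps r K j" using 1 by blast
    qed
    finally show "dstage eps r K i \<subseteq> dstage eps r K j" .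
  qed
qed

lemma dpow_le:
  assumes "Well_order r" "a \<in> Field r"
  shows "dpow eps r K \<subseteq> dstage eps r K a"
  unfolding dpow_def
proof (rule dstep_le[OF Well_order_antisym[OF assms(1)] assms(2)])
  fix m assume "m \<in> Field r" "(a, m) \<in> r" "a \<noteq> m"
  then have "a \<in> underS r m" by (simp add: underS_def)
  then show "dstage eps r K m \<subseteq> dstage eps r K a" using dstage_anti[OF assms(1)] by blast
qed

lemma osum_Inl_Inl: "(Inl j, Inl m) \<in> osum r r' \<longleftrightarrow> (j, m) \<in> r"
  unfolding osum_def by auto

lemma osum_Inr_Inr: "(Inr j, Inr m) \<in> osum r r' \<longleftrightarrow> (j, m) \<in> r'"
  unfolding osum_def by auto

lemma osum_Inr_Inl: "(Inr j, Inl m) \<notin> osum r r'"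
  unfolding osum_def by auto

lemma osum_Inl_Inr: "(Inl j, Inr m) \<in> osum r r' \<longleftrightarrow> j \<in> Field r \<and> m \<in> Field r'"
  unfolding osum_def by auto

lemmas osum_simps = osum_Inl_Inl osum_Inr_Inr osum_Inr_Inl osum_Inl_Inr

lemma Field_osum: "Field (osum r r') = Inl ` Field r \<union> Inr ` Field r'"
  unfolding osum_def Field_def by auto

lemma underS_osum_Inl: "underS (osum r r') (Inl a) = Inl ` underS r a"
proof (intro set_eqI)
  fix x show "x \<in> underS (osum r r') (Inl a) \<longleftrightarrow> x \<in> Inl ` underS r a"
    by (cases x) (auto simp: underS_def osum_simps)
qed

lemma underS_osum_Inr:
  assumes "b \<in> Field r'"
  shows "underS (osum r r') (Inr b) = Inl ` Field r \<union> Inr ` underS r' b"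
proof (intro set_eqI)
  fix x show "x \<in> underS (osum r r') (Inr b) \<longleftrightarrow> x \<in> Inl ` Field r \<union> Inr ` underS r' b"
    using assms by (cases x) (auto simp: underS_def osum_simps)
qed

lemma antisym_osum: "antisym r \<Longrightarrow> antisym r' \<Longrightarrow> antisym (osum r r')"
  unfolding antisym_def by (auto simp: osum_def)

lemma wf_osum:
  assumes "wf (r - Id)" "wf (r' - Id)"
  shows "wf ((osum r r') - Id)"
proof -
  let ?R1 = "map_prod Inl Inl ` (r - Id) :: ('a + 'b) rel"
  let ?R2 = "map_prod Inr Inr ` (r' - Id) :: ('a + 'b) rel"
  let ?R3 = "{(x, y). isl x \<and> \<not> isl y} :: ('a + 'b) rel"
  have "wf ?R1" by (rule wf_map_prod_image[OF assms(1)]) simp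
  moreover have "wf ?R2" by (rule wf_map_prod_image[OF assms(2)]) simp
  moreover have "wf ?R3"
    by (rule wf_subset[OF wf_measure[of "\<lambda>x. if isl x then 0 else 1"]]) auto
  ultimately have "wf ((?R1 \<union> ?R3) \<union> ?R2)" by (intro wf_Un) auto
  then show ?thesis by (rule wf_subset) (auto simp: osum_def)
qed

lemma dstep_osum_Inl:
  assumes anti: "antisym a" "antisym b" and eq: "\<forall>j\<in>U. D' (Inl j) = D j"
  shows "dstep eps (osum a b) (Inl ` U) D' K = dstep eps a U D K"
proof (cases "\<exists>m\<in>U. \<forall>j\<in>U. (j, m) \<in> a")
  case True
  then obtain m where m: "m \<in> U" "\<forall>j\<in>U. (j, m) \<in> a" by blast
  have "\<forall>j\<in>Inl ` U. (j, Inl m) \<in> osum a b" using m(2) by (auto simp: osum_Inl_Inl)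
  then have "dstep eps (osum a b) (Inl ` U) D' K = dder eps (D' (Inl m))"
    using m(1) by (intro dstep_max antisym_osum anti) auto
  also have "\<dots> = dder eps (D m)" using eq m(1) by simp
  also have "\<dots> = dstep eps a U D K" by (rule dstep_max[OF anti(1) m, symmetric])
  finally show ?thesis .
next
  case no_max: False
  show ?thesis
  proof (cases "U = {}")
    case False
    have "\<not> (\<exists>M\<in>Inl ` U. \<forall>j\<in>Inl ` U. (j, M) \<in> osum a b)"
      using no_max by (auto simp: osum_Inl_Inl)
    then have "dstep eps (osum a b) (Inl ` U) D' K = (\<Inter>j\<in>Inl ` U. D' j)"
      using False by (intro dstep_limit) auto
    also have "\<dots> = (\<Inter>j\<in>U. D j)" using eq by simp
    also have "\<dots> = dstep eps a U D K" by (rule dstep_limit[OF False no_max, symmetric])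
    finally show ?thesis .
  qed (simp add: dstep_empty)
qed

text \<open>The stages of the
  left summand drop out of intersections because all right stages lie below L.\<close>
lemma dstep_osum_Inr:
  assumes anti: "antisym a" "antisym b" and U: "U \<subseteq> Field b"
    and L: "L = dstep eps (osum a b) (Inl ` Field a) D' K"
    and left: "\<forall>x\<in>Field a. L \<subseteq> D' (Inl x)"
    and right: "\<forall>j\<in>U. D' (Inr j) = D j \<and> D j \<subseteq> L"
  shows "dstep eps (osum a b) (Inl ` Field a \<union> Inr ` U) D' K = dstep eps b U D L"
proof (cases "\<exists>m\<in>U. \<forall>j\<in>U. (j, m) \<in> b")
  case True
  then obtain m where m: "m \<in> U" "\<forall>j\<in>U. (j, m) \<in> b" by blast
  have "\<forall>j\<in>Inl ` Field a \<union> Inr ` U. (j, Inr m) \<in> osum a b"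
    using m U by (auto simp: osum_Inr_Inr osum_Inl_Inr)
  then have "dstep eps (osum a b) (Inl ` Field a \<union> Inr ` U) D' K = dder eps (D' (Inr m))"
    using m(1) by (intro dstep_max antisym_osum anti) auto
  also have "\<dots> = dder eps (D m)" using right m(1) by simp
  also have "\<dots> = dstep eps b U D L" by (rule dstep_max[OF anti(2) m, symmetric])
  finally show ?thesis .
next
  case no_max: False
  show ?thesis
  proof (cases "U = {}")
    case False
    let ?A = "Inl ` Field a \<union> Inr ` U"
    have "\<not> (\<exists>M\<in>?A. \<forall>j\<in>?A. (j, M) \<in> osum a b)"
    proof
      assume "\<exists>M\<in>?A. \<forall>j\<in>?A. (j, M) \<in> osum a b"
      then obtain M where M: "M \<in> ?A" "\<forall>j\<in>?A. (j, M) \<in> osum a b" by blast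
      obtain j0 where "j0 \<in> U" using False by blast
      then have "(Inr j0, M) \<in> osum a b" using M(2) by blast
      then obtain m where Mm: "M = Inr m" by (cases M) (auto simp: osum_Inr_Inl)
      have "m \<in> U" using M(1) Mm by blast
      moreover have "(j, m) \<in> b" if "j \<in> U" for j
      proof -
        have "(Inr j, M) \<in> osum a b" using M(2) that by blast
        then show ?thesis using Mm by (simp add: osum_Inr_Inr)
      qed
      ultimately show False using no_max by blast
    qed
    then have "dstep eps (osum a b) ?A D' K = (\<Inter>j\<in>?A. D' j)"
      using False by (intro dstep_limit) auto
    also have "\<dots> = (\<Inter>j\<in>U. D j)"
    proof -
      have "(\<Inter>j\<in>U. D j) \<subseteq> L" using right False by blast
      then show ?thesis using left right by (auto simp: INT_Un)
    qed
    also have "\<dots> = dstep eps b U D L" by (rule dstep_limit[OF False no_max, symmetric])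
    finally show ?thesis .
  qed (simp add: L dstep_empty)
qed

theorem dpow_osum:
  assumes wa: "Well_order a" and wb: "Well_order b"
  shows "dpow eps (osum a b) K = dpow eps b (dpow eps a K)"
proof -
  let ?s = "osum a b" and ?D = "dstage eps (osum a b) K" and ?L = "dpow eps a K"
  have anti: "antisym a" "antisym b" using Well_order_antisym wa wb by blast+
  have wfs: "wf (?s - Id)" by (rule wf_osum[OF Well_order_wf[OF wa] Well_order_wf[OF wb]])
  have left: "?D (Inl x) = dstage eps a K x" for x
  proof (induction x rule: wf_induct[OF Well_order_wf[OF wa]])
    case (1 x)
    have "?D (Inl x) = dstep eps ?s (underS ?s (Inl x)) ?D K" by (rule dstage_eq[OF wfs])
    also have "\<dots> = dstep eps a (underS a x) (dstage eps a K) K"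
      unfolding underS_osum_Inl
      by (rule dstep_osum_Inl[OF anti]) (use 1 in \<open>auto simp: underS_def\<close>)
    also have "\<dots> = dstage eps a K x" by (rule dstage_eq[OF Well_order_wf[OF wa], symmetric])
    finally show ?case .
  qed
  have L: "?L = dstep eps ?s (Inl ` Field a) ?D K"
    unfolding dpow_def by (rule dstep_osum_Inl[OF anti, symmetric]) (simp add: left)
  have L_left: "\<forall>x\<in>Field a. ?L \<subseteq> ?D (Inl x)" using dpow_le[OF wa] left by auto
  have right: "b' \<in> Field b \<longrightarrow> ?D (Inr b') = dstage eps b ?L b'" for b'
  proof (induction b' rule: wf_induct[OF Well_order_wf[OF wb]])
    case (1 b')
    show ?case
    proof
      assume b': "b' \<in> Field b"
      have "?D (Inr b') = dstep eps ?s (underS ?s (Inr b')) ?D K" by (rule dstage_eq[OF wfs])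
      also have "\<dots> = dstep eps b (underS b b') (dstage eps b ?L) ?L"
        unfolding underS_osum_Inr[OF b']
      proof (rule dstep_osum_Inr[OF anti _ L L_left])
        show "underS b b' \<subseteq> Field b" by (auto simp: underS_def intro: FieldI1)
        show "\<forall>j\<in>underS b b'. ?D (Inr j) = dstage eps b ?L j \<and> dstage eps b ?L j \<subseteq> ?L"
          using 1 dstage_sub[OF wb, of eps ?L] by (auto simp: underS_def intro: FieldI1)
      qed
      also have "\<dots> = dstage eps b ?L b'" by (rule dstage_eq[OF Well_order_wf[OF wb], symmetric])
      finally show "?D (Inr b') = dstage eps b ?L b'" .
    qed
  qed
  have "dpow eps ?s K = dstep eps ?s (Inl ` Field a \<union> Inr ` Field b) ?D K"
    unfolding dpow_def Field_osum ..
  also have "\<dots> = dstep eps b (Field b) (dstage eps b ?L) ?L"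
    by (rule dstep_osum_Inr[OF anti _ L L_left]) (use right dstage_sub[OF wb, of eps ?L] in auto)
  also have "\<dots> = dpow eps b ?L" unfolding dpow_def ..
  finally show ?thesis .
qed

text \<open>One derivation step commutes with an isometric adjoint: a weak*-slice H(x,t) of E
  pulls back to the weak*-slice H(T x, t) of D, whose diameter is no larger, so points of D
  that survive the derivation are mapped to points of E that survive it.\<close>
lemma dder_transfer:
  fixes T :: "'a::real_normed_vector \<Rightarrow>\<^sub>L 'c::real_normed_vector"
  assumes iso: "\<forall>z :: 'c \<Rightarrow>\<^sub>L real. norm (z o\<^sub>L T) = norm z"
    and maps: "(\<lambda>z. z o\<^sub>L T) ` D \<subseteq> E" and bd: "bounded E"
  shows "(\<lambda>z. z o\<^sub>L T) ` dder eps D \<subseteq> dder eps E"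
proof
  fix y assume "y \<in> (\<lambda>z. z o\<^sub>L T) ` dder eps D"
  then obtain z where z: "z \<in> dder eps D" and y: "y = z o\<^sub>L T" by blast
  have zD: "z \<in> D" using z by (simp add: dder_def)
  have "z o\<^sub>L T \<notin> S" if S: "S = wstar_slice x t E" "diameter S < eps" for S x t
  proof
    assume zS: "z o\<^sub>L T \<in> S"
    define S' where "S' = wstar_slice (T x) t D"
    have zS': "z \<in> S'" using zS zD S(1) by (simp add: S'_def wstar_slice_def)
    have "diameter S' \<le> diameter S"
    proof (rule diameter_le)
      show "S' \<noteq> {} \<or> 0 \<le> diameter S" using zS' by auto
      fix u v assume "u \<in> S'" "v \<in> S'"
      then have "u o\<^sub>L T \<in> S" "v o\<^sub>L T \<in> S" using maps S(1) by (auto simp: S'_def wstar_slice_def)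
      moreover have "bounded S" using bd S(1) by (auto intro: bounded_subset simp: wstar_slice_def)
      ultimately have "dist (u o\<^sub>L T) (v o\<^sub>L T) \<le> diameter S" by (rule diameter_bounded_bound[rotated])
      moreover have "dist (u o\<^sub>L T) (v o\<^sub>L T) = norm (u - v)"
        using iso[rule_format, of "u - v"]
        by (simp add: dist_norm bounded_bilinear.diff_left[OF bounded_bilinear_blinfun_compose])
      ultimately show "norm (u - v) \<le> diameter S" by simp
    qed
    then have "diameter S' < eps" using S(2) by simp
    then have "z \<notin> dder eps D" using zS' unfolding dder_def S'_def by blast
    then show False using z by simp
  qed
  then show "y \<in> dder eps E" using maps zD y unfolding dder_def by blast
qed

lemma dstep_transfer:
  fixes T :: "'a::real_normed_vector \<Rightarrow>\<^sub>L 'c::real_normed_vector"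
  assumes anti: "antisym r" and iso: "\<forall>z :: 'c \<Rightarrow>\<^sub>L real. norm (z o\<^sub>L T) = norm z"
    and KL: "(\<lambda>z. z o\<^sub>L T) ` K \<subseteq> L"
    and DE: "\<forall>j\<in>A. (\<lambda>z. z o\<^sub>L T) ` D j \<subseteq> E j \<and> bounded (E j)"
  shows "(\<lambda>z. z o\<^sub>L T) ` dstep eps r A D K \<subseteq> dstep eps r A E L"
proof (cases "\<exists>m\<in>A. \<forall>j\<in>A. (j, m) \<in> r")
  case True
  then obtain m where m: "m \<in> A" "\<forall>j\<in>A. (j, m) \<in> r" by blast
  show ?thesis
    unfolding dstep_max[OF anti m] by (rule dder_transfer[OF iso]) (use DE m(1) in auto)
next
  case no_max: False
  show ?thesis
  proof (cases "A = {}")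
    case False
    show ?thesis unfolding dstep_limit[OF False no_max] using DE by blast
  qed (simp add: KL dstep_empty)
qed

theorem dpow_transfer:
  fixes T :: "'a::real_normed_vector \<Rightarrow>\<^sub>L 'c::real_normed_vector"
  assumes wr: "Well_order r" and iso: "\<forall>z :: 'c \<Rightarrow>\<^sub>L real. norm (z o\<^sub>L T) = norm z"
    and KL: "(\<lambda>z. z o\<^sub>L T) ` K \<subseteq> L" and bd: "bounded L"
  shows "(\<lambda>z. z o\<^sub>L T) ` dpow eps r K \<subseteq> dpow eps r L"
proof -
  let ?T = "\<lambda>z :: 'c \<Rightarrow>\<^sub>L real. z o\<^sub>L T"
  have anti: "antisym r" by (rule Well_order_antisym[OF wr])
  have bd_stage: "bounded (dstage eps r L i)" for i
    by (rule bounded_subset[OF bd dstage_sub[OF wr]])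
  have stage: "?T ` dstage eps r K i \<subseteq> dstage eps r L i" for i
  proof (induction i rule: wf_induct[OF Well_order_wf[OF wr]])
    case (1 i)
    have "?T ` dstage eps r K i = ?T ` dstep eps r (underS r i) (dstage eps r K) K"
      by (subst dstage_eq[OF Well_order_wf[OF wr]]) (rule refl)
    also have "\<dots> \<subseteq> dstep eps r (underS r i) (dstage eps r L) L"
      by (rule dstep_transfer[OF anti iso KL]) (use 1 bd_stage in \<open>auto simp: underS_def\<close>)
    also have "\<dots> = dstage eps r L i" by (rule dstage_eq[OF Well_order_wf[OF wr], symmetric])
    finally show ?case .
  qed
  show ?thesis
    unfolding dpow_def by (rule dstep_transfer[OF anti iso KL]) (use stage bd_stage in blast)
qed

theorem mainTheorem5:
  fixes T :: "'a::banach \<Rightarrow>\<^sub>L 'c::banach"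
    and Y :: "('a \<Rightarrow>\<^sub>L real) set"
    and eps :: real
    and \<alpha> :: "'i rel"
  assumes "subspace Y" and "closed Y"
    and "\<forall>z :: 'c \<Rightarrow>\<^sub>L real. norm (z o\<^sub>L T) = norm z"
    and "(\<lambda>z :: 'c \<Rightarrow>\<^sub>L real. z o\<^sub>L T) ` UNIV = Y"
    and "eps > 0"
    and "Well_order \<alpha>"
    and "cball 0 1 \<inter> Y \<subseteq> dpow eps \<alpha> (cball 0 1)"
  shows "\<forall>(\<beta> :: 'j rel) (z :: 'c \<Rightarrow>\<^sub>L real). Well_order \<beta> \<longrightarrow>
           z \<in> dpow eps \<beta> (cball 0 1) \<longrightarrow> z o\<^sub>L T \<in> dpow eps (\<alpha> +o \<beta>) (cball 0 1)"
proof (intro allI impI)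
  fix \<beta> :: "'j rel" and z :: "'c \<Rightarrow>\<^sub>L real"
  assume w\<beta>: "Well_order \<beta>" and z: "z \<in> dpow eps \<beta> (cball 0 1)"
  let ?T = "\<lambda>w :: 'c \<Rightarrow>\<^sub>L real. w o\<^sub>L T"
  have "?T ` cball 0 1 \<subseteq> cball 0 1 \<inter> Y"
    using assms(3,4) by auto
  then have ball_into: "?T ` cball 0 1 \<subseteq> dpow eps \<alpha> (cball 0 1)"
    using assms(7) by blast
  have "bounded (dpow eps \<alpha> (cball 0 1 :: ('a \<Rightarrow>\<^sub>L real) set))"
    by (rule bounded_subset[OF bounded_cball dpow_sub[OF assms(6)]])
  then have "?T ` dpow eps \<beta> (cball 0 1) \<subseteq> dpow eps \<beta> (dpow eps \<alpha> (cball 0 1))"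
    by (rule dpow_transfer[OF w\<beta> assms(3) ball_into])
  also have "\<dots> = dpow eps (\<alpha> +o \<beta>) (cball 0 1)"
    by (rule dpow_osum[OF assms(6) w\<beta>, symmetric])
  finally show "z o\<^sub>L T \<in> dpow eps (\<alpha> +o \<beta>) (cball 0 1)" using z by blast
qed

end
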